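(* Let $\theta$ be an eigenvalue of a distance-regular graph $\Gamma$ with valency $k$ and diameter $3$, and let $u_0,u_1,u_2,u_3$ be its standard sequence. Then the following are equivalent: (i) $u_2(\theta)=0$; (ii) $\theta=a_3$; (iii) $\theta=\frac{a_1+\sqrt{a_1^2+4k}}{2}$. Moreover, if (i)–(iii) hold, then $\theta$ is the second largest eigenvalue of $\Gamma$.
   Context: A connected graph $\Gamma$ of diameter $D$ is distance-regular if there are integers $b_i,c_i$ ($0\le i\le D$) such that for any two vertices $x,y$ at distance $i$, exactly $c_i$ neighbours of $y$ are at distance $i-1$ from $x$ and exactly $b_i$ neighbours of $y$ are at distance $i+1$ from $x$. Then $\Gamma$ is regular of valency $k=b_0$, and $a_i:=k-b_i-c_i$. The eigenvalues of $\Gamma$ are those of its adjacency matrix. For an eigenvalue $\theta$, the standard sequence $u_i=u_i(\theta)$ ($0\le i\le D$) is defined by $u_0=1$, $u_1=\theta/k$, and $c_iu_{i-1}+a_iu_i+b_iu_{i+1}=\theta u_i$ for $1\le i\le D-1$ (and these recurrences, with $b_D=0$, also hold for $i=D$ when $\theta$ is an eigenvalue). *)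

theory Defs
  imports Complex_Main
begin

definition simple_graph :: "'a set \<Rightarrow> ('a \<Rightarrow> 'a \<Rightarrow> bool) \<Rightarrow> bool" where
  "simple_graph V E \<longleftrightarrow> finite V \<and> V \<noteq> {} \<and>
     (\<forall>x y. E x y \<longrightarrow> x \<in> V \<and> y \<in> V) \<and>
     (\<forall>x y. E x y \<longrightarrow> E y x) \<and> (\<forall>x. \<not> E x x)"

fun reach :: "('a \<Rightarrow> 'a \<Rightarrow> bool) \<Rightarrow> nat \<Rightarrow> 'a \<Rightarrow> 'a \<Rightarrow> bool" where
  "reach E 0 x y = (x = y)"
| "reach E (Suc n) x y = (reach E n x y \<or> (\<exists>z. reach E n x z \<and> E z y))"

definition connected_graph :: "'a set \<Rightarrow> ('a \<Rightarrow> 'a \<Rightarrow> bool) \<Rightarrow> bool" where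
  "connected_graph V E \<longleftrightarrow> (\<forall>x\<in>V. \<forall>y\<in>V. \<exists>n. reach E n x y)"

text \<open>Path-length distance (meaningful in a connected graph).\<close>
definition gdist :: "('a \<Rightarrow> 'a \<Rightarrow> bool) \<Rightarrow> 'a \<Rightarrow> 'a \<Rightarrow> nat" where
  "gdist E x y = (LEAST n. reach E n x y)"

definition diameter :: "'a set \<Rightarrow> ('a \<Rightarrow> 'a \<Rightarrow> bool) \<Rightarrow> nat" where
  "diameter V E = Max {gdist E x y | x y. x \<in> V \<and> y \<in> V}"

text \<open>Distance-regular graph of diameter D with intersection numbers b i, c i (0 \<le> i \<le> D).
  For i = 0 the condition on c reads c 0 = 0 (x has no neighbour at distance 0 from x).\<close>
definition distance_regular ::
  "'a set \<Rightarrow> ('a \<Rightarrow> 'a \<Rightarrow> bool) \<Rightarrow> nat \<Rightarrow> (nat \<Rightarrow> nat) \<Rightarrow> (nat \<Rightarrow> nat) \<Rightarrow> bool" where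
  "distance_regular V E D b c \<longleftrightarrow> simple_graph V E \<and> connected_graph V E \<and> diameter V E = D \<and>
     (\<forall>i\<le>D. \<forall>x\<in>V. \<forall>y\<in>V. gdist E x y = i \<longrightarrow>
        card {z\<in>V. E y z \<and> i \<ge> 1 \<and> gdist E x z = i - 1} = c i \<and>
        card {z\<in>V. E y z \<and> gdist E x z = i + 1} = b i)"

definition drg_k :: "(nat \<Rightarrow> nat) \<Rightarrow> real" where
  "drg_k b = real (b 0)"

definition drg_a :: "(nat \<Rightarrow> nat) \<Rightarrow> (nat \<Rightarrow> nat) \<Rightarrow> nat \<Rightarrow> real" where
  "drg_a b c i = real (b 0) - real (b i) - real (c i)"

definition adj_eigenvalue :: "'a set \<Rightarrow> ('a \<Rightarrow> 'a \<Rightarrow> bool) \<Rightarrow> real \<Rightarrow> bool" where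
  "adj_eigenvalue V E \<theta> \<longleftrightarrow> (\<exists>f :: 'a \<Rightarrow> real. (\<exists>x\<in>V. f x \<noteq> 0) \<and>
      (\<forall>x\<in>V. (\<Sum>y\<in>{y\<in>V. E x y}. f y) = \<theta> * f x))"

text \<open>Second largest among the distinct eigenvalues.\<close>
definition second_largest_eigenvalue :: "'a set \<Rightarrow> ('a \<Rightarrow> 'a \<Rightarrow> bool) \<Rightarrow> real \<Rightarrow> bool" where
  "second_largest_eigenvalue V E \<theta> \<longleftrightarrow> adj_eigenvalue V E \<theta> \<and>
     (\<exists>\<mu>. adj_eigenvalue V E \<mu> \<and> \<theta> < \<mu>) \<and>
     (\<forall>\<mu> \<nu>. adj_eigenvalue V E \<mu> \<and> adj_eigenvalue V E \<nu> \<and> \<theta> < \<mu> \<and> \<theta> < \<nu> \<longrightarrow> \<mu> = \<nu>)"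

fun std_seq :: "(nat \<Rightarrow> nat) \<Rightarrow> (nat \<Rightarrow> nat) \<Rightarrow> real \<Rightarrow> nat \<Rightarrow> real" where
  "std_seq b c \<theta> 0 = 1"
| "std_seq b c \<theta> (Suc 0) = \<theta> / drg_k b"
| "std_seq b c \<theta> (Suc (Suc i)) =
     (\<theta> * std_seq b c \<theta> (Suc i) - real (c (Suc i)) * std_seq b c \<theta> i
        - drg_a b c (Suc i) * std_seq b c \<theta> (Suc i)) / real (b (Suc i))"

end

theory Submission
  imports Defs
begin

text \<open>Summing an eigenvector over the distance classes from a fixed vertex turns the eigenvalue
  equation into the three-term recurrence of the intersection numbers. Hence every eigenvalue of a
  distance-regular graph of diameter \<open>D\<close> is a root of \<open>p\<^sub>D\<^sub>+\<^sub>1\<close>, where the \<open>p\<^sub>i\<close> are the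
  continuants of the intersection matrix; moreover \<open>u\<^sub>i = p\<^sub>i / (b\<^sub>0 \<cdots> b\<^sub>i\<^sub>-\<^sub>1)\<close>.
  For \<open>D = 3\<close> one has \<open>p\<^sub>4 = (x - a\<^sub>3)((x - a\<^sub>2) p\<^sub>2 - b\<^sub>1 c\<^sub>2 x) - b\<^sub>2 c\<^sub>3 p\<^sub>2\<close> with
  \<open>p\<^sub>2 = x\<^sup>2 - a\<^sub>1 x - k\<close>, so \<open>p\<^sub>2(\<theta>) = 0\<close> exactly when \<open>\<theta> = a\<^sub>3\<close>, and since \<open>a\<^sub>3 \<ge> 0\<close> this
  root is the positive root of \<open>p\<^sub>2\<close>. Then \<open>p\<^sub>4 = (x - \<theta>) R(x)\<close> for a monic cubic \<open>R\<close> which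
  is positive at the negative root of \<open>p\<^sub>2\<close> and negative at \<open>\<theta>\<close>; so \<open>R\<close> has at most one root
  above \<open>\<theta>\<close>, and the valency \<open>k\<close> is one.\<close>

lemma positive_root_quadratic:
  fixes a k x :: real
  assumes "0 < k"
  shows "x\<^sup>2 - a * x - k = 0 \<and> 0 \<le> x \<longleftrightarrow> x = (a + sqrt (a\<^sup>2 + 4 * k)) / 2"
proof -
  define s where "s = sqrt (a\<^sup>2 + 4 * k)"
  have pos: "\<bar>a\<bar>\<^sup>2 < a\<^sup>2 + 4 * k"
    using assms by simp
  then have s2: "s\<^sup>2 = a\<^sup>2 + 4 * k" and s_gt: "\<bar>a\<bar> < s"
    unfolding s_def using zero_le_power2[of "\<bar>a\<bar>"] by (simp_all add: real_less_rsqrt)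
  have completed_square: "x\<^sup>2 - a * x - k = ((2 * x - a)\<^sup>2 - s\<^sup>2) / 4"
    unfolding s2 by (simp add: power2_eq_square field_simps)
  have "x\<^sup>2 - a * x - k = 0 \<longleftrightarrow> (2 * x - a)\<^sup>2 = s\<^sup>2"
    unfolding completed_square by simp
  then have "x\<^sup>2 - a * x - k = 0 \<longleftrightarrow> 2 * x - a = s \<or> 2 * x - a = - s"
    by (simp add: power2_eq_iff)
  with s_gt show ?thesis
    unfolding s_def[symmetric] by auto
qed

lemma monic_cubic_unique_root_above:
  fixes R :: "real \<Rightarrow> real"
  assumes R: "\<And>x. R x = x ^ 3 + p * x\<^sup>2 + q * x + r"
    and "t' < t" "0 < R t'" "R t < 0"
    and \<mu>: "t < \<mu>" "R \<mu> = 0" and \<nu>: "t < \<nu>" "R \<nu> = 0"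
  shows "\<mu> = \<nu>"
proof (rule ccontr)
  assume ne: "\<mu> \<noteq> \<nu>"
  define w where "w = - p - \<mu> - \<nu>"
  have "(\<nu> - \<mu>) * (\<nu>\<^sup>2 + \<nu> * \<mu> + \<mu>\<^sup>2 + p * (\<nu> + \<mu>) + q) = R \<nu> - R \<mu>"
    unfolding R by (simp add: algebra_simps power2_eq_square power3_eq_cube)
  with ne \<mu> \<nu> have S: "\<nu>\<^sup>2 + \<nu> * \<mu> + \<mu>\<^sup>2 + p * (\<nu> + \<mu>) + q = 0" by simp
  have q: "q = \<nu> * \<mu> + \<nu> * w + \<mu> * w"
    using S by (simp add: w_def algebra_simps power2_eq_square)
  have r: "r = - \<nu> * \<mu> * w"
  proof -
    have "- \<nu> * \<mu> * w - r = \<nu> * (\<nu>\<^sup>2 + \<nu> * \<mu> + \<mu>\<^sup>2 + p * (\<nu> + \<mu>) + q) - R \<nu>"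
      unfolding R by (simp add: w_def algebra_simps power2_eq_square power3_eq_cube)
    with S \<nu> show ?thesis by simp
  qed
  have F: "R x = (x - \<nu>) * (x - \<mu>) * (x - w)" for x
    unfolding R q r by (simp add: w_def algebra_simps power2_eq_square power3_eq_cube)
  have "0 < (t - \<nu>) * (t - \<mu>)" "0 < (t' - \<nu>) * (t' - \<mu>)"
    using assms by (simp_all add: mult_neg_neg)
  then have "t < w" "w < t'"
    using assms F[of t] F[of t'] by (auto simp: zero_less_mult_iff mult_less_0_iff)
  with \<open>t' < t\<close> show False by simp
qed

text \<open>\<open>intersection_poly b c i\<close> is the characteristic polynomial of the leading \<open>i \<times> i\<close>
  principal submatrix of the tridiagonal intersection matrix (with \<open>a\<^sub>0 = 0\<close>).\<close>

fun intersection_poly :: "(nat \<Rightarrow> nat) \<Rightarrow> (nat \<Rightarrow> nat) \<Rightarrow> nat \<Rightarrow> real \<Rightarrow> real" where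
  "intersection_poly b c 0 \<mu> = 1"
| "intersection_poly b c (Suc 0) \<mu> = \<mu>"
| "intersection_poly b c (Suc (Suc i)) \<mu> =
     (\<mu> - drg_a b c (Suc i)) * intersection_poly b c (Suc i) \<mu>
       - real (b i) * real (c (Suc i)) * intersection_poly b c i \<mu>"

lemma intersection_poly_two:
  "c 1 = 1 \<Longrightarrow> intersection_poly b c 2 \<mu> = \<mu>\<^sup>2 - drg_a b c 1 * \<mu> - drg_k b"
  by (simp add: numeral_2_eq_2 drg_k_def power2_eq_square algebra_simps)

lemma intersection_poly_four:
  "intersection_poly b c 4 \<mu> =
     (\<mu> - drg_a b c 3) * ((\<mu> - drg_a b c 2) * intersection_poly b c 2 \<mu> - real (b 1) * real (c 2) * \<mu>)
       - real (b 2) * real (c 3) * intersection_poly b c 2 \<mu>"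
  by (simp add: eval_nat_numeral)

lemma std_seq_eq_intersection_poly:
  assumes "\<And>j. j < i \<Longrightarrow> b j \<noteq> 0"
  shows "std_seq b c \<theta> i = intersection_poly b c i \<theta> / (\<Prod>j<i. real (b j))"
  using assms
proof (induction b c \<theta> i rule: std_seq.induct)
  case (3 b c \<theta> i)
  define P where "P = (\<Prod>j<i. real (b j))"
  have "P \<noteq> 0" "b i \<noteq> 0" "b (Suc i) \<noteq> 0"
    using "3.prems" by (auto simp: P_def)
  moreover have "(\<Prod>j<Suc i. real (b j)) = real (b i) * P"
    "(\<Prod>j<Suc (Suc i). real (b j)) = real (b (Suc i)) * (real (b i) * P)"
    by (simp_all add: P_def)
  moreover have "intersection_poly b c i \<theta> = P * std_seq b c \<theta> i"
    "intersection_poly b c (Suc i) \<theta> = real (b i) * P * std_seq b c \<theta> (Suc i)"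
    using "3.IH" "3.prems" calculation by (auto simp: P_def field_simps)
  ultimately show ?case
    by (simp add: P_def[symmetric] field_simps)
qed (simp_all add: drg_k_def)

lemma gdist_le: "reach E n x y \<Longrightarrow> gdist E x y \<le> n"
  unfolding gdist_def by (rule Least_le)

locale distance_regular_graph =
  fixes V :: "'a set" and E :: "'a \<Rightarrow> 'a \<Rightarrow> bool" and D :: nat and b c :: "nat \<Rightarrow> nat"
  assumes distance_regular: "distance_regular V E D b c"
begin

lemma finite_vertices: "finite V"
  and vertices_nonempty: "V \<noteq> {}"
  and adjacent_in_vertices: "E x y \<Longrightarrow> x \<in> V \<and> y \<in> V"
  and adjacent_sym: "E x y \<Longrightarrow> E y x"
  and not_adjacent_self: "\<not> E x x"
  using distance_regular by (auto simp: distance_regular_def simple_graph_def)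

lemma intersection_numbers:
  assumes "i \<le> D" "x \<in> V" "y \<in> V" "gdist E x y = i"
  shows "card {z\<in>V. E y z \<and> i \<ge> 1 \<and> gdist E x z = i - 1} = c i"
    and "card {z\<in>V. E y z \<and> gdist E x z = i + 1} = b i"
  using distance_regular assms unfolding distance_regular_def by blast+

lemma reach_gdist: "x \<in> V \<Longrightarrow> y \<in> V \<Longrightarrow> reach E (gdist E x y) x y"
  using distance_regular unfolding distance_regular_def connected_graph_def gdist_def
  by (metis LeastI_ex)

lemma gdist_adjacent_le: "x \<in> V \<Longrightarrow> E y z \<Longrightarrow> gdist E x z \<le> Suc (gdist E x y)"
  using reach_gdist[of x y] adjacent_in_vertices[of y z] gdist_le[of E "Suc (gdist E x y)" x z]
  by auto

lemma gdist_eq_0_iff: "x \<in> V \<Longrightarrow> y \<in> V \<Longrightarrow> gdist E x y = 0 \<longleftrightarrow> x = y"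
  using reach_gdist[of x y] gdist_le[of E 0 x y] by auto

lemma gdist_adjacent: "E x y \<Longrightarrow> gdist E x y = 1"
  using gdist_le[of E 1 x y] gdist_eq_0_iff[of x y] adjacent_in_vertices[of x y] not_adjacent_self[of x]
  by fastforce

lemma gdist_SucE:
  assumes "x \<in> V" "y \<in> V" "gdist E x y = Suc m"
  obtains z where "E z y" "gdist E x z = m"
proof -
  have "reach E (Suc m) x y" "\<not> reach E m x y"
    using reach_gdist[of x y] gdist_le[of E m x y] assms by auto
  then obtain z where z: "reach E m x z" "E z y" by auto
  with gdist_le[OF z(1)] gdist_adjacent_le[OF assms(1) z(2)] assms(3)
  have "gdist E x z = m" by simp
  with z(2) show thesis by (rule that)
qed

lemma gdist_le_diameter: "x \<in> V \<Longrightarrow> y \<in> V \<Longrightarrow> gdist E x y \<le> D"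
proof -
  assume "x \<in> V" "y \<in> V"
  moreover have "finite {gdist E x y | x y. x \<in> V \<and> y \<in> V}"
    using finite_vertices by (simp add: finite_image_set2)
  ultimately show ?thesis
    using distance_regular unfolding distance_regular_def diameter_def by (auto intro: Max_ge)
qed

lemma gdist_intermediate:
  "x \<in> V \<Longrightarrow> y \<in> V \<Longrightarrow> m \<le> gdist E x y \<Longrightarrow> \<exists>z\<in>V. gdist E x z = m"
proof (induction "gdist E x y" arbitrary: y)
  case 0
  then show ?case by auto
next
  case (Suc n)
  show ?case
  proof (cases "m = Suc n")
    case True
    with Suc.prems Suc.hyps(2) show ?thesis by metis
  next
    case False
    obtain z where "E z y" "gdist E x z = n"
      using gdist_SucE[OF Suc.prems(1,2) Suc.hyps(2)[symmetric]] .
    with Suc False adjacent_in_vertices[of z y] show ?thesis by auto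
  qed
qed

lemma distance_classes_nonempty: "\<exists>x\<in>V. \<forall>m\<le>D. \<exists>y\<in>V. gdist E x y = m"
proof -
  let ?dists = "{gdist E x y | x y. x \<in> V \<and> y \<in> V}"
  have "finite ?dists" "?dists \<noteq> {}"
    using finite_vertices vertices_nonempty by (auto simp: finite_image_set2)
  then have "Max ?dists \<in> ?dists"
    by (rule Max_in)
  moreover have "Max ?dists = D"
    using distance_regular by (simp add: distance_regular_def diameter_def)
  ultimately have "D \<in> ?dists"
    by simp
  then obtain x y where "x \<in> V" "y \<in> V" "gdist E x y = D" by blast
  then show ?thesis using gdist_intermediate[of x y] by auto
qed

lemma card_neighbours:
  assumes "z \<in> V"
  shows "card {w\<in>V. E z w} = b 0"
proof -
  have "{w\<in>V. E z w} = {w\<in>V. E z w \<and> gdist E z w = 0 + 1}"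
    using gdist_adjacent by auto
  also have "card \<dots> = b 0"
    using assms gdist_eq_0_iff[OF assms assms] by (intro intersection_numbers(2)) simp_all
  finally show ?thesis .
qed

lemma card_adjacent_at_distance:
  assumes x: "x \<in> V" and z: "z \<in> V"
  defines "j \<equiv> gdist E x z"
  shows "real (card {y\<in>V. E z y \<and> gdist E x y = m}) =
    (if m = Suc j then real (b j) else 0) + (if m = j then drg_a b c j else 0)
      + (if Suc m = j then real (c j) else 0)"
proof -
  have j: "j \<le> D" "gdist E x z = j" using gdist_le_diameter[OF x z] by (simp_all add: j_def)
  let ?N = "\<lambda>m. {y\<in>V. E z y \<and> gdist E x y = m}"
  have closer: "card {y\<in>V. E z y \<and> j \<ge> 1 \<and> gdist E x y = j - 1} = c j"
    and further: "card (?N (j + 1)) = b j"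
    using intersection_numbers[OF j(1) x z j(2)] .
  have near: "gdist E x y = j \<or> (j \<ge> 1 \<and> gdist E x y = j - 1) \<or> gdist E x y = j + 1"
    if "E z y" for y
    using gdist_adjacent_le[OF x that] gdist_adjacent_le[OF x adjacent_sym[OF that]] j(2) by linarith
  consider "m = Suc j" | "Suc m = j" | "m = j" | "m \<noteq> Suc j" "Suc m \<noteq> j" "m \<noteq> j" by blast
  then show ?thesis
  proof cases
    case 1
    with further show ?thesis by simp
  next
    case 2
    then have "?N m = {y\<in>V. E z y \<and> j \<ge> 1 \<and> gdist E x y = j - 1}" by auto
    with 2 closer show ?thesis by simp
  next
    case 3
    let ?C = "{y\<in>V. E z y \<and> j \<ge> 1 \<and> gdist E x y = j - 1}"
    have "{y\<in>V. E z y} = ?N j \<union> (?C \<union> ?N (j + 1))"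
      using near by auto
    then have "card {y\<in>V. E z y} = card (?N j \<union> (?C \<union> ?N (j + 1)))"
      by simp
    also have "\<dots> = card (?N j) + card (?C \<union> ?N (j + 1))"
      using finite_vertices by (intro card_Un_disjoint) auto
    also have "card (?C \<union> ?N (j + 1)) = c j + b j"
      unfolding closer[symmetric] further[symmetric] using finite_vertices
      by (intro card_Un_disjoint) auto
    finally have "real (card (?N j)) = real (b 0) - real (b j) - real (c j)"
      using card_neighbours[OF z] by linarith
    with 3 show ?thesis unfolding drg_a_def by simp
  next
    case 4
    then have "?N m = {}" using near by force
    with 4 show ?thesis by (simp only: card.empty) simp
  qed
qed

lemma c_one: "1 \<le> D \<Longrightarrow> c 1 = 1"
proof -
  assume "1 \<le> D"
  then obtain x y where xy: "x \<in> V" "y \<in> V" "gdist E x y = 1"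
    using distance_classes_nonempty by blast
  then obtain z where "E z y" "gdist E x z = 0" using gdist_SucE[of x y 0] by auto
  then have "z = x" "E y x" using gdist_eq_0_iff xy adjacent_in_vertices adjacent_sym by blast+
  then have "{w\<in>V. E y w \<and> gdist E x w = 0} = {x}" using gdist_eq_0_iff xy by auto
  with card_adjacent_at_distance[OF xy(1,2), of 0] xy(3) show "c 1 = 1" by simp
qed

lemma b_pos: "i < D \<Longrightarrow> 0 < b i"
proof -
  assume "i < D"
  then obtain x y where xy: "x \<in> V" "y \<in> V" "gdist E x y = Suc i"
    using distance_classes_nonempty by (metis Suc_leI)
  then obtain z where z: "E z y" "gdist E x z = i" using gdist_SucE by blast
  then have "y \<in> {w\<in>V. E z w \<and> gdist E x w = Suc i}" using xy by simp
  then have "0 < card {w\<in>V. E z w \<and> gdist E x w = Suc i}"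
    using finite_vertices by (auto simp: card_gt_0_iff)
  with card_adjacent_at_distance[OF xy(1), of z "Suc i"] z adjacent_in_vertices show "0 < b i"
    by simp
qed

lemma c_pos: "0 < i \<Longrightarrow> i \<le> D \<Longrightarrow> 0 < c i"
proof -
  assume "0 < i" "i \<le> D"
  then obtain i' where i': "i = Suc i'" by (metis gr0_implies_Suc)
  obtain x y where xy: "x \<in> V" "y \<in> V" "gdist E x y = i"
    using distance_classes_nonempty \<open>i \<le> D\<close> by blast
  then obtain z where z: "E z y" "gdist E x z = i'" using gdist_SucE i' by blast
  then have "z \<in> {w\<in>V. E y w \<and> gdist E x w = i'}" using adjacent_in_vertices adjacent_sym by blast
  then have "0 < card {w\<in>V. E y w \<and> gdist E x w = i'}"
    using finite_vertices by (auto simp: card_gt_0_iff)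
  with card_adjacent_at_distance[OF xy(1,2), of i'] xy(3) i' show "0 < c i" by simp
qed

lemma b_diameter: "b D = 0"
proof -
  obtain x y where xy: "x \<in> V" "y \<in> V" "gdist E x y = D"
    using distance_classes_nonempty by blast
  have "{w\<in>V. E y w \<and> gdist E x w = Suc D} = {}"
    using gdist_le_diameter[OF xy(1)] by fastforce
  with card_adjacent_at_distance[OF xy(1,2), of "Suc D"] xy(3) show ?thesis by simp
qed

lemma drg_a_nonneg: "i \<le> D \<Longrightarrow> 0 \<le> drg_a b c i"
proof -
  assume "i \<le> D"
  then obtain x y where xy: "x \<in> V" "y \<in> V" "gdist E x y = i"
    using distance_classes_nonempty by blast
  with card_adjacent_at_distance[OF xy(1,2), of i] show ?thesis by simp
qed

lemma valency_eigenvalue: "adj_eigenvalue V E (drg_k b)"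
  unfolding adj_eigenvalue_def drg_k_def
  using vertices_nonempty card_neighbours by (intro exI[of _ "\<lambda>_. 1"]) auto

lemma distance_class_sum_recurrence:
  assumes x: "x \<in> V" and eig: "\<forall>y\<in>V. (\<Sum>z\<in>{z\<in>V. E y z}. f z) = \<mu> * f y"
  defines "g \<equiv> \<lambda>i. \<Sum>z\<in>{z\<in>V. gdist E x z = i}. f z"
  shows "\<mu> * g (Suc i) = real (b i) * g i + drg_a b c (Suc i) * g (Suc i)
           + real (c (Suc (Suc i))) * g (Suc (Suc i))"
proof -
  let ?S = "{y\<in>V. gdist E x y = Suc i}"
  have class_sum: "(\<Sum>z\<in>V. if gdist E x z = j then \<alpha> * f z else 0) = \<alpha> * g j" for j \<alpha>
    unfolding g_def by (simp add: sum.inter_filter[OF finite_vertices, symmetric] sum_distrib_left)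
  have "\<mu> * g (Suc i) = (\<Sum>y\<in>?S. \<Sum>z\<in>V. if E y z then f z else 0)"
    unfolding g_def sum_distrib_left
    using eig by (intro sum.cong) (auto simp: sum.inter_filter[OF finite_vertices])
  also have "\<dots> = (\<Sum>z\<in>V. \<Sum>y\<in>?S. if E y z then f z else 0)"
    by (rule sum.swap)
  also have "\<dots> = (\<Sum>z\<in>V. f z * real (card {y\<in>V. E z y \<and> gdist E x y = Suc i}))"
  proof (intro sum.cong refl)
    fix z assume "z \<in> V"
    have "{y\<in>?S. E y z} = {y\<in>V. E z y \<and> gdist E x y = Suc i}"
      using adjacent_sym by blast
    then show "(\<Sum>y\<in>?S. if E y z then f z else 0) = f z * real (card {y\<in>V. E z y \<and> gdist E x y = Suc i})"
      using finite_vertices by (simp add: sum.inter_filter[symmetric])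
  qed
  also have "\<dots> = (\<Sum>z\<in>V. (if gdist E x z = i then real (b i) * f z else 0)
      + (if gdist E x z = Suc i then drg_a b c (Suc i) * f z else 0)
      + (if gdist E x z = Suc (Suc i) then real (c (Suc (Suc i))) * f z else 0))"
    using card_adjacent_at_distance[OF x] by (intro sum.cong) auto
  also have "\<dots> = real (b i) * g i + drg_a b c (Suc i) * g (Suc i)
      + real (c (Suc (Suc i))) * g (Suc (Suc i))"
    by (simp only: sum.distrib class_sum)
  finally show ?thesis .
qed

theorem eigenvalue_root_intersection_poly:
  assumes "1 \<le> D" and "adj_eigenvalue V E \<mu>"
  shows "intersection_poly b c (Suc D) \<mu> = 0"
proof -
  obtain f x where x: "x \<in> V" and fx: "f x \<noteq> 0"
    and eig: "\<forall>y\<in>V. (\<Sum>z\<in>{z\<in>V. E y z}. f z) = \<mu> * f y"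
    using assms(2) unfolding adj_eigenvalue_def by blast
  define g where "g i = (\<Sum>z\<in>{z\<in>V. gdist E x z = i}. f z)" for i
  \<comment> \<open>the recurrence for \<open>g\<close> makes \<open>c\<^sub>1 \<cdots> c\<^sub>i g\<^sub>i = p\<^sub>i(\<mu>) g\<^sub>0\<close>, and \<open>g\<^sub>D\<^sub>+\<^sub>1 = 0 \<noteq> g\<^sub>0\<close>\<close>
  have "{z\<in>V. gdist E x z = 0} = {x}"
    using gdist_eq_0_iff[OF x] x by auto
  then have g0: "g 0 = f x"
    unfolding g_def by simp
  have g1: "g 1 = \<mu> * g 0"
  proof -
    have "{z\<in>V. gdist E x z = 1} = {z\<in>V. E x z}"
    proof (intro set_eqI iffI)
      fix z assume z: "z \<in> {z\<in>V. gdist E x z = 1}"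
      then obtain w where "E w z" "gdist E x w = 0"
        using gdist_SucE[OF x, of z 0] by auto
      then show "z \<in> {z\<in>V. E x z}"
        using gdist_eq_0_iff[OF x] adjacent_in_vertices adjacent_sym by blast
    qed (auto simp: gdist_adjacent)
    then show ?thesis using eig x g0 unfolding g_def by simp
  qed
  let ?C = "\<lambda>i. \<Prod>j\<in>{1..i}. real (c j)"
  have scaled: "?C i * g i = intersection_poly b c i \<mu> * g 0" for i
  proof (induction i rule: induct_nat_012)
    case 1
    with g1 c_one[OF assms(1)] show ?case by simp
  next
    case (ge2 i)
    have "?C (Suc (Suc i)) * g (Suc (Suc i)) = ?C (Suc i) * (c (Suc (Suc i)) * g (Suc (Suc i)))"
      by (simp add: prod.nat_ivl_Suc')
    also have "\<dots> = ?C (Suc i) * ((\<mu> - drg_a b c (Suc i)) * g (Suc i) - b i * g i)"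
      using distance_class_sum_recurrence[OF x eig, of i] unfolding g_def by (simp add: algebra_simps)
    also have "\<dots> = (\<mu> - drg_a b c (Suc i)) * (?C (Suc i) * g (Suc i))
        - b i * c (Suc i) * (?C i * g i)"
      by (simp add: prod.nat_ivl_Suc' algebra_simps)
    also have "\<dots> = intersection_poly b c (Suc (Suc i)) \<mu> * g 0"
      using ge2 by (simp add: algebra_simps)
    finally show ?case .
  qed simp
  have beyond_diameter: "{z\<in>V. gdist E x z = Suc D} = {}"
    using gdist_le_diameter[OF x] by force
  have "g (Suc D) = 0"
    unfolding g_def beyond_diameter by simp
  with scaled[of "Suc D"] g0 fx show ?thesis by simp
qed

lemma diameter3_intersection_poly_two_root_iff:
  assumes "D = 3" and "adj_eigenvalue V E \<theta>"
  shows "intersection_poly b c 2 \<theta> = 0 \<longleftrightarrow> \<theta> = drg_a b c 3"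
proof -
  let ?q = "intersection_poly b c 2 \<theta>"
  have root: "(\<theta> - drg_a b c 3) * ((\<theta> - drg_a b c 2) * ?q - real (b 1) * real (c 2) * \<theta>)
      - real (b 2) * real (c 3) * ?q = 0"
    using eigenvalue_root_intersection_poly[OF _ assms(2)] assms(1) intersection_poly_four by simp
  have pos: "0 < b 0" "0 < b 1" "0 < b 2" "0 < c 2" "0 < c 3"
    using b_pos c_pos assms(1) by auto
  show ?thesis
  proof
    assume q: "?q = 0"
    moreover have "?q = \<theta>\<^sup>2 - drg_a b c 1 * \<theta> - drg_k b"
      using intersection_poly_two c_one assms(1) by simp
    ultimately have "\<theta> \<noteq> 0"
      using pos(1) by (auto simp: drg_k_def)
    with q root pos show "\<theta> = drg_a b c 3" by simp
  next
    assume "\<theta> = drg_a b c 3"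
    with root pos show "?q = 0" by simp
  qed
qed

lemma diameter3_second_largest_eigenvalue:
  assumes "D = 3" and eig: "adj_eigenvalue V E \<theta>" and \<theta>: "\<theta> = drg_a b c 3"
  shows "second_largest_eigenvalue V E \<theta>"
proof -
  define k where "k = drg_k b"
  define t' where "t' = drg_a b c 1 - \<theta>"
  have pos: "0 < b 0" "0 < b 1" "0 < b 2" "0 < c 2" "0 < c 3"
    using b_pos c_pos assms(1) by auto
  have "intersection_poly b c 2 \<theta> = 0"
    using diameter3_intersection_poly_two_root_iff assms by simp
  then have quadratic: "\<theta>\<^sup>2 - drg_a b c 1 * \<theta> - k = 0"
    using intersection_poly_two c_one assms(1) by (simp add: k_def)
  have k_pos: "0 < k" using pos(1) by (simp add: k_def drg_k_def)
  have "\<theta> * t' = - k"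
    using quadratic by (simp add: t'_def power2_eq_square algebra_simps)
  moreover have "0 \<le> \<theta>"
    using drg_a_nonneg assms(1) \<theta> by simp
  ultimately have "0 < \<theta>"
    using k_pos by (cases "\<theta> = 0") auto
  moreover have "\<theta> * t' < 0"
    using \<open>\<theta> * t' = - k\<close> k_pos by simp
  ultimately have "t' < 0"
    by (simp add: mult_less_0_iff)
  have q_factor: "intersection_poly b c 2 x = (x - \<theta>) * (x - t')" for x
  proof -
    have "(x - \<theta>) * (x - t') = x\<^sup>2 - (\<theta> + t') * x + \<theta> * t'"
      by (simp add: algebra_simps power2_eq_square)
    then show ?thesis
      using intersection_poly_two c_one assms(1) \<open>\<theta> * t' = - k\<close> by (simp add: k_def t'_def)
  qed
  \<comment> \<open>the cofactor of \<open>x - \<theta>\<close> in \<open>p\<^sub>4\<close>\<close>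
  define R where "R x = (x - \<theta>) * (x - drg_a b c 2) * (x - t')
    - real (b 1) * real (c 2) * x - real (b 2) * real (c 3) * (x - t')" for x
  have R_coeffs: "R x = x ^ 3 + (- \<theta> - drg_a b c 2 - t') * x\<^sup>2
      + (\<theta> * drg_a b c 2 + \<theta> * t' + drg_a b c 2 * t' - b 1 * c 2 - b 2 * c 3) * x
      + (b 2 * c 3 * t' - \<theta> * drg_a b c 2 * t')" for x
    unfolding R_def by (simp add: algebra_simps power2_eq_square power3_eq_cube)
  have "0 < R t'"
    using pos \<open>t' < 0\<close> by (simp add: R_def mult_pos_neg)
  have "0 < real (b 1) * real (c 2) * \<theta>" "0 < real (b 2) * real (c 3) * (\<theta> - t')"
    using pos \<open>0 < \<theta>\<close> \<open>t' < 0\<close> by simp_all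
  then have "R \<theta> < 0"
    by (simp add: R_def)
  have char_factor: "intersection_poly b c 4 x = (x - \<theta>) * R x" for x
    unfolding intersection_poly_four q_factor R_def \<theta>[symmetric] by (simp add: algebra_simps)
  have R_root: "R \<mu> = 0" if "adj_eigenvalue V E \<mu>" "\<theta> < \<mu>" for \<mu>
    using eigenvalue_root_intersection_poly[OF _ that(1)] assms(1) char_factor[of \<mu>] that(2)
    by simp
  have "\<theta> < k"
    using \<theta> b_diameter c_pos[of 3] assms(1) by (simp add: k_def drg_k_def drg_a_def)
  moreover have "adj_eigenvalue V E k"
    unfolding k_def by (rule valency_eigenvalue)
  moreover have "\<mu> = \<nu>" if "adj_eigenvalue V E \<mu>" "\<theta> < \<mu>" "adj_eigenvalue V E \<nu>" "\<theta> < \<nu>" for \<mu> \<nu>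
    by (rule monic_cubic_unique_root_above[OF R_coeffs _ \<open>0 < R t'\<close> \<open>R \<theta> < 0\<close>])
      (use \<open>t' < 0\<close> \<open>0 < \<theta>\<close> R_root that in auto)
  ultimately show ?thesis
    unfolding second_largest_eigenvalue_def using eig by blast
qed

end

theorem theorem7:
  fixes V :: "'a set" and E :: "'a \<Rightarrow> 'a \<Rightarrow> bool" and b c :: "nat \<Rightarrow> nat" and \<theta> :: real
  assumes "distance_regular V E 3 b c"
    and "adj_eigenvalue V E \<theta>"
  shows "(std_seq b c \<theta> 2 = 0 \<longleftrightarrow> \<theta> = drg_a b c 3)
    \<and> (\<theta> = drg_a b c 3 \<longleftrightarrow> \<theta> = (drg_a b c 1 + sqrt ((drg_a b c 1)\<^sup>2 + 4 * drg_k b)) / 2)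
    \<and> (std_seq b c \<theta> 2 = 0 \<longrightarrow> second_largest_eigenvalue V E \<theta>)"
proof -
  interpret distance_regular_graph V E 3 b c
    by unfold_locales (rule assms(1))
  have b_nonzero: "b j \<noteq> 0" if "j < 2" for j
    using b_pos that by simp
  then have u2_eq: "std_seq b c \<theta> 2 = intersection_poly b c 2 \<theta> / (\<Prod>j<2. real (b j))"
    by (rule std_seq_eq_intersection_poly)
  have nonzero: "(\<Prod>j<2. real (b j)) \<noteq> 0"
    using b_nonzero by simp
  have u2: "std_seq b c \<theta> 2 = 0 \<longleftrightarrow> intersection_poly b c 2 \<theta> = 0"
    by (simp only: u2_eq divide_eq_0_iff nonzero simp_thms)
  have roots: "intersection_poly b c 2 \<theta> = 0 \<longleftrightarrow> \<theta> = drg_a b c 3"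
    using diameter3_intersection_poly_two_root_iff assms(2) by simp
  have "\<theta> = drg_a b c 3 \<longleftrightarrow> intersection_poly b c 2 \<theta> = 0 \<and> 0 \<le> \<theta>"
    using roots drg_a_nonneg[of 3] by auto
  also have "\<dots> \<longleftrightarrow> \<theta> = (drg_a b c 1 + sqrt ((drg_a b c 1)\<^sup>2 + 4 * drg_k b)) / 2"
    using intersection_poly_two c_one positive_root_quadratic b_pos[of 0] by (simp add: drg_k_def)
  finally show ?thesis
    using u2 roots diameter3_second_largest_eigenvalue assms(2) by blast
qed

end
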